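(* There exist uncountably many W-subshifts $X \subset \{0,1\}^{\mathbb Z}$ which are neither sofic nor strongly irreducible.
   Context: A subshift of $A^{\mathbb Z}$ is a closed shift-invariant subset, with shift $(gx)(h)=x(h-g)$. $X$ is of finite type if there are finite $\Omega\subset\mathbb Z$ and $\mathcal P\subset A^\Omega$ with $X=\{x:(gx)|_\Omega\in\mathcal P\ \forall g\}$; $X$ is sofic if it is the image of a subshift of finite type $Y\subset B^{\mathbb Z}$ ($B$ finite) under a surjective continuous shift-equivariant map. $X$ is strongly irreducible if there is finite $\Delta\subset\mathbb Z$ such that for all finite $\Omega_1,\Omega_2$ with $(\Omega_1-\Delta)\cap\Omega_2=\varnothing$ and all $x_1,x_2\in X$ there is $x\in X$ agreeing with $x_1$ on $\Omega_1$ and with $x_2$ on $\Omega_2$. $L(X)$ is the set of finite words (including the empty word) appearing as $x(i)\cdots x(j)$ in some $x\in X$. $X$ is a W-subshift if there is an integer $n_0\ge0$ such that for all $u,v\in L(X)$ there is $c\in L(X)$ with $|c|\le n_0$ and $ucv\in L(X)$. *)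

theory Defs
  imports Main "HOL-Library.Countable_Set" "HOL-Library.FuncSet"
begin

definition shift :: "int \<Rightarrow> (int \<Rightarrow> 'a) \<Rightarrow> (int \<Rightarrow> 'a)" where
  "shift g x = (\<lambda>h. x (h - g))"

text \<open>Closedness in the product topology of the (discrete) finite alphabet:
  a configuration all of whose central windows are approximated by elements
  of X lies in X.\<close>

definition closed_conf :: "(int \<Rightarrow> 'a) set \<Rightarrow> bool" where
  "closed_conf X \<longleftrightarrow>
     (\<forall>x. (\<forall>n::nat. \<exists>y\<in>X. \<forall>i. \<bar>i\<bar> \<le> int n \<longrightarrow> y i = x i) \<longrightarrow> x \<in> X)"

definition subshift :: "(int \<Rightarrow> 'a) set \<Rightarrow> bool" where
  "subshift X \<longleftrightarrow> closed_conf X \<and> (\<forall>g. \<forall>x\<in>X. shift g x \<in> X)"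

definition SFT_over :: "nat set \<Rightarrow> (int \<Rightarrow> nat) set \<Rightarrow> bool" where
  "SFT_over B Y \<longleftrightarrow> finite B \<and>
     (\<exists>\<Omega> P. finite \<Omega> \<and> P \<subseteq> (\<Omega> \<rightarrow>\<^sub>E B) \<and>
        Y = {y. range y \<subseteq> B \<and> (\<forall>g. restrict (shift g y) \<Omega> \<in> P)})"

definition continuous_conf_on :: "(int \<Rightarrow> 'b) set \<Rightarrow> ((int \<Rightarrow> 'b) \<Rightarrow> (int \<Rightarrow> 'a)) \<Rightarrow> bool" where
  "continuous_conf_on Y \<phi> \<longleftrightarrow>
     (\<forall>x\<in>Y. \<forall>n::nat. \<exists>m::nat. \<forall>y\<in>Y.
        (\<forall>i. \<bar>i\<bar> \<le> int m \<longrightarrow> y i = x i) \<longrightarrow> (\<forall>i. \<bar>i\<bar> \<le> int n \<longrightarrow> \<phi> y i = \<phi> x i))"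

definition equivariant_on :: "(int \<Rightarrow> 'b) set \<Rightarrow> ((int \<Rightarrow> 'b) \<Rightarrow> (int \<Rightarrow> 'a)) \<Rightarrow> bool" where
  "equivariant_on Y \<phi> \<longleftrightarrow> (\<forall>g. \<forall>y\<in>Y. \<phi> (shift g y) = shift g (\<phi> y))"

definition sofic :: "(int \<Rightarrow> 'a) set \<Rightarrow> bool" where
  "sofic X \<longleftrightarrow> (\<exists>B Y \<phi>. SFT_over B Y \<and> continuous_conf_on Y \<phi> \<and> equivariant_on Y \<phi>
                       \<and> \<phi> ` Y = X)"

definition strongly_irreducible :: "(int \<Rightarrow> 'a) set \<Rightarrow> bool" where
  "strongly_irreducible X \<longleftrightarrow>
     (\<exists>\<Delta>::int set. finite \<Delta> \<and>
       (\<forall>\<Omega>1 \<Omega>2. finite \<Omega>1 \<and> finite \<Omega>2 \<and> {a - d |a d. a \<in> \<Omega>1 \<and> d \<in> \<Delta>} \<inter> \<Omega>2 = {} \<longrightarrow>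
          (\<forall>x1\<in>X. \<forall>x2\<in>X. \<exists>x\<in>X. (\<forall>i\<in>\<Omega>1. x i = x1 i) \<and> (\<forall>i\<in>\<Omega>2. x i = x2 i))))"

definition lang :: "(int \<Rightarrow> 'a) set \<Rightarrow> 'a list set" where
  "lang X = {map (\<lambda>k. x (i + int k)) [0..<n] | x i n. x \<in> X}"

definition W_subshift :: "(int \<Rightarrow> 'a) set \<Rightarrow> bool" where
  "W_subshift X \<longleftrightarrow> subshift X \<and>
     (\<exists>n0::nat. \<forall>u\<in>lang X. \<forall>v\<in>lang X. \<exists>c\<in>lang X. length c \<le> n0 \<and> u @ c @ v \<in> lang X)"

end

theory Submission
  imports Defs
begin

(*
  Consecutive 1s of the subshift gap_shift T lie at distances d with d mod 4 = 2 or
  d = 4k + 4 for some k in T. Since the distances 2 mod 4 are always allowed, any two words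
  can be joined through a bridge of length at most 7 carrying a single 1; since all distances
  are even, the sites 0 and n are never independent for odd n, which rules out strong
  irreducibility; and T can be read off gap_shift T, so these shifts are uncountably many.
  Sofic shifts, on the other hand, are only countably many: by compactness a continuous
  equivariant image of a subshift of finite type is given by a sliding block code, so every
  sofic shift is determined by finite data.
*)

section \<open>Words of configurations\<close>

definition window :: "(int \<Rightarrow> 'a) \<Rightarrow> int \<Rightarrow> nat \<Rightarrow> 'a list" where
  "window x i n = map (\<lambda>k. x (i + int k)) [0..<n]"

lemma length_window [simp]: "length (window x i n) = n"
  by (simp add: window_def)

lemma lang_eq_windows: "lang X = {window x i n | x i n. x \<in> X}"
  by (simp add: lang_def window_def)

lemma window_in_lang: "x \<in> X \<Longrightarrow> window x i n \<in> lang X"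
  by (auto simp: lang_eq_windows)

lemma window_append: "window x i (m + n) = window x i m @ window x (i + int m) n"
  unfolding window_def by (induction n) (simp_all add: add.assoc)

lemma window_cong:
  "(\<And>k. i \<le> k \<Longrightarrow> k < i + int n \<Longrightarrow> x k = y k) \<Longrightarrow> window x i n = window y i n"
  by (simp add: window_def)

lemma window_shift: "window (shift g x) i n = window x (i - g) n"
  by (simp add: window_def shift_def algebra_simps)

lemma subshift_word_at_origin:
  assumes "subshift X" and "w \<in> lang X"
  obtains x where "x \<in> X" and "w = window x 0 (length w)"
proof -
  obtain x i n where x: "x \<in> X" and w: "w = window x i n"
    using assms(2) by (auto simp: lang_eq_windows)
  have "shift (-i) x \<in> X"
    using assms(1) x by (simp add: subshift_def)
  moreover have "w = window (shift (-i) x) 0 (length w)"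
    using w by (simp add: window_shift)
  ultimately show thesis by (rule that)
qed

section \<open>Countability of sofic shifts\<close>

definition SFT_set :: "nat set \<Rightarrow> int set \<Rightarrow> (int \<Rightarrow> nat) set \<Rightarrow> (int \<Rightarrow> nat) set" where
  "SFT_set B \<Omega> P = {y. range y \<subseteq> B \<and> (\<forall>g. restrict (shift g y) \<Omega> \<in> P)}"

lemma SFT_over_iff:
  "SFT_over B Y \<longleftrightarrow> finite B \<and> (\<exists>\<Omega> P. finite \<Omega> \<and> P \<subseteq> \<Omega> \<rightarrow>\<^sub>E B \<and> Y = SFT_set B \<Omega> P)"
  by (simp add: SFT_over_def SFT_set_def)

lemma shift_shift: "shift g (shift h y) = shift (g + h) y"
  by (simp add: shift_def algebra_simps)

lemma shift_SFT_set: "y \<in> SFT_set B \<Omega> P \<Longrightarrow> shift h y \<in> SFT_set B \<Omega> P"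
  by (auto simp: SFT_set_def shift_shift) (auto simp: shift_def)

lemma closed_SFT_set:
  assumes "finite \<Omega>"
  shows "closed_conf (SFT_set B \<Omega> P)"
  unfolding closed_conf_def
proof (intro allI impI)
  fix y :: "int \<Rightarrow> nat"
  assume approx: "\<forall>n::nat. \<exists>w\<in>SFT_set B \<Omega> P. \<forall>i. \<bar>i\<bar> \<le> int n \<longrightarrow> w i = y i"
  have "y i \<in> B" for i
  proof -
    obtain w where w: "w \<in> SFT_set B \<Omega> P" and "\<forall>j. \<bar>j\<bar> \<le> int (nat \<bar>i\<bar>) \<longrightarrow> w j = y j"
      using approx by blast
    then have "y i = w i" by simp
    with w show ?thesis by (auto simp: SFT_set_def)
  qed
  moreover have "restrict (shift g y) \<Omega> \<in> P" for g
  proof -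
    define n where "n = nat (\<Sum>h\<in>\<Omega>. \<bar>h - g\<bar>)"
    obtain w where w: "w \<in> SFT_set B \<Omega> P" and agree: "\<forall>j. \<bar>j\<bar> \<le> int n \<longrightarrow> w j = y j"
      using approx by blast
    have "\<bar>h - g\<bar> \<le> int n" if "h \<in> \<Omega>" for h
      using member_le_sum[OF that, of "\<lambda>h. \<bar>h - g\<bar>"] assms sum_nonneg[of \<Omega> "\<lambda>h. \<bar>h - g\<bar>"]
      unfolding n_def by simp
    then have "restrict (shift g w) \<Omega> = restrict (shift g y) \<Omega>"
      using agree by (auto simp: shift_def)
    with w show ?thesis by (metis (mono_tags, lifting) SFT_set_def mem_Collect_eq)
  qed
  ultimately show "y \<in> SFT_set B \<Omega> P"
    by (auto simp: SFT_set_def)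
qed

lemma infinite_subset_agreeing_on_window:
  fixes S :: "nat \<Rightarrow> int \<Rightarrow> 'b"
  assumes "finite B" and range_S: "\<And>m. range (S m) \<subseteq> B" and "infinite A"
  shows "\<exists>A'\<subseteq>A. infinite A' \<and> (\<forall>m\<in>A'. \<forall>m'\<in>A'. \<forall>i. \<bar>i\<bar> \<le> int k \<longrightarrow> S m i = S m' i)"
proof -
  define f where "f m = restrict (S m) {-int k..int k}" for m
  have "f ` A \<subseteq> {-int k..int k} \<rightarrow>\<^sub>E B"
    using range_subsetD[OF range_S] by (auto simp: f_def)
  moreover have "finite ({-int k..int k} \<rightarrow>\<^sub>E B)"
    using \<open>finite B\<close> by (simp add: finite_PiE)
  ultimately have "finite (f ` A)"
    by (rule finite_subset)
  then obtain a where "infinite {m\<in>A. f m = f a}"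
    using pigeonhole_infinite[OF \<open>infinite A\<close>] by blast
  moreover have "\<forall>m\<in>{m\<in>A. f m = f a}. \<forall>m'\<in>{m\<in>A. f m = f a}.
      \<forall>i. \<bar>i\<bar> \<le> int k \<longrightarrow> S m i = S m' i"
  proof (intro ballI allI impI)
    fix m m' i
    assume "m \<in> {m\<in>A. f m = f a}" "m' \<in> {m\<in>A. f m = f a}" "\<bar>i\<bar> \<le> int k"
    then have "f m i = f m' i" and "i \<in> {-int k..int k}"
      by auto
    then show "S m i = S m' i"
      by (simp add: f_def)
  qed
  ultimately show ?thesis
    by (intro exI[of _ "{m\<in>A. f m = f a}"]) blast
qed

lemma finite_alphabet_cluster_point:
  fixes S :: "nat \<Rightarrow> int \<Rightarrow> 'b"
  assumes "finite B" and "\<And>m. range (S m) \<subseteq> B"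
  shows "\<exists>y. \<forall>k::nat. \<exists>m\<ge>k. \<forall>i. \<bar>i\<bar> \<le> int k \<longrightarrow> S m i = y i"
proof -
  define agree where "agree k A \<longleftrightarrow> (\<forall>m\<in>A. \<forall>m'\<in>A. \<forall>i. \<bar>i\<bar> \<le> int k \<longrightarrow> S m i = S m' i)"
    for k :: nat and A :: "nat set"
  have "\<exists>F. \<forall>k. infinite (F k) \<and> F (Suc k) \<subseteq> F k \<and> agree k (F (Suc k))"
  proof (rule dependent_nat_choice[where P = "\<lambda>_ A. infinite A"
        and Q = "\<lambda>k A A'. A' \<subseteq> A \<and> agree k A'"])
    show "\<exists>A. infinite (A :: nat set)"
      using infinite_UNIV_nat by blast
    show "\<exists>A'. infinite A' \<and> A' \<subseteq> A \<and> agree k A'" if A: "infinite A" for A k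
    proof -
      obtain A' where "A' \<subseteq> A \<and> infinite A' \<and> agree k A'"
        using infinite_subset_agreeing_on_window[OF assms A, of k] unfolding agree_def ..
      then show ?thesis by blast
    qed
  qed
  then obtain F where F: "\<And>k. infinite (F k)" and F_Suc: "\<And>k. F (Suc k) \<subseteq> F k"
    and F_agree: "\<And>k. agree k (F (Suc k))"
    by blast
  have F_mono: "F k' \<subseteq> F k" if "k \<le> k'" for k k'
    using that by (induction k' rule: dec_induct) (use F_Suc in blast)+
  \<comment> \<open>all members of F (Suc |i|) agree at site i, so the choice is irrelevant\<close>
  define y where "y i = S (SOME m. m \<in> F (Suc (nat \<bar>i\<bar>))) i" for i
  have "\<exists>m\<ge>k. \<forall>i. \<bar>i\<bar> \<le> int k \<longrightarrow> S m i = y i" for k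
  proof -
    obtain m where m: "m \<in> F (Suc k)" "m \<ge> k"
      using F[of "Suc k"] infinite_nat_iff_unbounded_le by blast
    have "S m i = y i" if "\<bar>i\<bar> \<le> int k" for i
    proof -
      let ?K = "Suc (nat \<bar>i\<bar>)"
      have "?K \<le> Suc k"
        using that by (simp add: nat_le_iff)
      then have m_K: "m \<in> F ?K"
        using F_mono m(1) by blast
      have some_K: "(SOME m. m \<in> F ?K) \<in> F ?K"
        using F[of ?K] by (metis finite.emptyI some_in_eq)
      have "S m i = S (SOME m. m \<in> F ?K) i"
        using F_agree[of "nat \<bar>i\<bar>", unfolded agree_def, rule_format, OF m_K some_K, of i] by simp
      then show ?thesis
        by (simp only: y_def)
    qed
    with m(2) show ?thesis by blast
  qed
  then show ?thesis by blast
qed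

lemma continuous_conf_on_uniform:
  fixes \<phi> :: "(int \<Rightarrow> 'b) \<Rightarrow> (int \<Rightarrow> 'a)"
  assumes "finite B" and "closed_conf Y" and range_Y: "\<And>y. y \<in> Y \<Longrightarrow> range y \<subseteq> B"
    and cont: "continuous_conf_on Y \<phi>"
  shows "\<exists>m::nat. \<forall>y\<in>Y. \<forall>z\<in>Y. (\<forall>i. \<bar>i\<bar> \<le> int m \<longrightarrow> y i = z i) \<longrightarrow> \<phi> y 0 = \<phi> z 0"
proof (rule ccontr)
  assume "\<not> ?thesis"
  then have "\<forall>m. \<exists>y z. y \<in> Y \<and> z \<in> Y \<and> (\<forall>i. \<bar>i\<bar> \<le> int m \<longrightarrow> y i = z i)
      \<and> \<phi> y 0 \<noteq> \<phi> z 0"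
    by blast
  then obtain ys zs where ys: "\<And>m. ys m \<in> Y" and zs: "\<And>m. zs m \<in> Y"
    and agree: "\<And>m i. \<bar>i\<bar> \<le> int m \<Longrightarrow> ys m i = zs m i"
    and differ: "\<And>m. \<phi> (ys m) 0 \<noteq> \<phi> (zs m) 0"
    by metis
  have "range (ys m) \<subseteq> B" for m
    using range_Y ys by blast
  then obtain y where y: "\<forall>k::nat. \<exists>m\<ge>k. \<forall>i. \<bar>i\<bar> \<le> int k \<longrightarrow> ys m i = y i"
    using finite_alphabet_cluster_point[OF \<open>finite B\<close>] by blast
  have "y \<in> Y"
    using \<open>closed_conf Y\<close> y ys unfolding closed_conf_def by blast
  then obtain m0 :: nat where
    m0: "\<forall>w\<in>Y. (\<forall>i. \<bar>i\<bar> \<le> int m0 \<longrightarrow> w i = y i)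
      \<longrightarrow> (\<forall>i. \<bar>i\<bar> \<le> int 0 \<longrightarrow> \<phi> w i = \<phi> y i)"
    using cont unfolding continuous_conf_on_def by blast
  obtain m where "m0 \<le> m" and ys_close: "\<forall>i. \<bar>i\<bar> \<le> int m0 \<longrightarrow> ys m i = y i"
    using y by blast
  have zs_close: "\<forall>i. \<bar>i\<bar> \<le> int m0 \<longrightarrow> zs m i = y i"
  proof (intro allI impI)
    fix i assume "\<bar>i\<bar> \<le> int m0"
    moreover from this have "\<bar>i\<bar> \<le> int m"
      using \<open>m0 \<le> m\<close> by linarith
    ultimately show "zs m i = y i"
      using agree[of i m] ys_close by simp
  qed
  have "\<phi> (ys m) 0 = \<phi> y 0" and "\<phi> (zs m) 0 = \<phi> y 0"
    using m0[rule_format, OF ys ys_close[rule_format], of 0]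
      m0[rule_format, OF zs zs_close[rule_format], of 0]
    by simp_all
  with differ[of m] show False by simp
qed

definition block_code :: "nat \<Rightarrow> (int \<Rightarrow> 'b) set \<Rightarrow> (int \<Rightarrow> 'b) \<Rightarrow> (int \<Rightarrow> bool)" where
  "block_code m T y = (\<lambda>i. restrict (shift (-i) y) {-int m..int m} \<in> T)"

lemma equivariant_on_eq_block_code:
  fixes \<phi> :: "(int \<Rightarrow> 'b) \<Rightarrow> (int \<Rightarrow> bool)"
  assumes shift_Y: "\<And>g y. y \<in> Y \<Longrightarrow> shift g y \<in> Y"
    and range_Y: "\<And>y. y \<in> Y \<Longrightarrow> range y \<subseteq> B"
    and equiv: "equivariant_on Y \<phi>"
    and m: "\<forall>y\<in>Y. \<forall>z\<in>Y. (\<forall>i. \<bar>i\<bar> \<le> int m \<longrightarrow> y i = z i) \<longrightarrow> \<phi> y 0 = \<phi> z 0"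
  shows "\<exists>T \<subseteq> {-int m..int m} \<rightarrow>\<^sub>E B. \<forall>y\<in>Y. \<phi> y = block_code m T y"
proof -
  let ?W = "{-int m..int m}"
  define T where "T = {restrict y ?W | y. y \<in> Y \<and> \<phi> y 0}"
  have "T \<subseteq> ?W \<rightarrow>\<^sub>E B"
    by (auto simp: T_def intro: range_subsetD[OF range_Y])
  have local_rule: "\<phi> y 0 \<longleftrightarrow> restrict y ?W \<in> T" if "y \<in> Y" for y
  proof
    show "\<phi> y 0 \<Longrightarrow> restrict y ?W \<in> T"
      using that by (auto simp: T_def)
  next
    assume "restrict y ?W \<in> T"
    then obtain y' where "y' \<in> Y" "\<phi> y' 0" and same: "restrict y' ?W = restrict y ?W"
      by (auto simp: T_def)
    have "y' i = y i" if "\<bar>i\<bar> \<le> int m" for i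
      using fun_cong[OF same, of i] that by (simp add: abs_le_iff)
    then show "\<phi> y 0"
      using m \<open>y' \<in> Y\<close> \<open>y \<in> Y\<close> \<open>\<phi> y' 0\<close> by blast
  qed
  have "\<forall>y\<in>Y. \<phi> y = block_code m T y"
  proof (intro ballI ext)
    fix y i assume "y \<in> Y"
    have "\<phi> (shift (-i) y) = shift (-i) (\<phi> y)"
      using equiv \<open>y \<in> Y\<close> unfolding equivariant_on_def by blast
    then have "\<phi> y i = \<phi> (shift (-i) y) 0"
      by (simp add: shift_def)
    then show "\<phi> y i = block_code m T y i"
      using local_rule[OF shift_Y[OF \<open>y \<in> Y\<close>]] by (simp add: block_code_def)
  qed
  with \<open>T \<subseteq> ?W \<rightarrow>\<^sub>E B\<close> show ?thesis
    by (intro exI[of _ T]) simp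
qed

lemma sofic_eq_block_code_image:
  fixes X :: "(int \<Rightarrow> bool) set"
  assumes "sofic X"
  shows "\<exists>B \<Omega> P m T. finite B \<and> finite \<Omega> \<and> P \<subseteq> \<Omega> \<rightarrow>\<^sub>E B \<and> T \<subseteq> {-int m..int m} \<rightarrow>\<^sub>E B
    \<and> X = block_code m T ` SFT_set B \<Omega> P"
proof -
  obtain B Y and \<phi> :: "(int \<Rightarrow> nat) \<Rightarrow> (int \<Rightarrow> bool)" where "SFT_over B Y"
    and cont: "continuous_conf_on Y \<phi>" and equiv: "equivariant_on Y \<phi>" and onto: "\<phi> ` Y = X"
    using assms unfolding sofic_def by blast
  then obtain \<Omega> P where "finite B" "finite \<Omega>" "P \<subseteq> \<Omega> \<rightarrow>\<^sub>E B" and Y: "Y = SFT_set B \<Omega> P"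
    by (auto simp: SFT_over_iff)
  have range_Y: "range y \<subseteq> B" if "y \<in> Y" for y
    using that by (simp add: Y SFT_set_def)
  obtain m :: nat where
    uniform: "\<forall>y\<in>Y. \<forall>z\<in>Y. (\<forall>i. \<bar>i\<bar> \<le> int m \<longrightarrow> y i = z i) \<longrightarrow> \<phi> y 0 = \<phi> z 0"
    using continuous_conf_on_uniform[OF \<open>finite B\<close> _ range_Y cont] closed_SFT_set[OF \<open>finite \<Omega>\<close>]
    unfolding Y by blast
  have shift_Y: "shift g y \<in> Y" if "y \<in> Y" for g y
    using that shift_SFT_set unfolding Y by blast
  obtain T where T: "T \<subseteq> {-int m..int m} \<rightarrow>\<^sub>E B \<and> (\<forall>y\<in>Y. \<phi> y = block_code m T y)"
    using equivariant_on_eq_block_code[OF shift_Y range_Y equiv uniform] ..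
  then have "X = block_code m T ` SFT_set B \<Omega> P"
    unfolding onto[symmetric] Y[symmetric] by (simp cong: image_cong)
  with T show ?thesis
    using \<open>finite B\<close> \<open>finite \<Omega>\<close> \<open>P \<subseteq> \<Omega> \<rightarrow>\<^sub>E B\<close> by blast
qed

lemma countable_sofic: "countable {X :: (int \<Rightarrow> bool) set. sofic X}"
proof -
  define params where "params = (SIGMA B:{B :: nat set. finite B}. SIGMA \<Omega>:{\<Omega> :: int set. finite \<Omega>}.
    SIGMA P:Pow (\<Omega> \<rightarrow>\<^sub>E B). SIGMA m:UNIV. Pow ({-int m..int m} \<rightarrow>\<^sub>E B))"
  have patterns: "countable (Pow (\<Omega> \<rightarrow>\<^sub>E B))" if "finite \<Omega>" and "finite B"
    for \<Omega> :: "int set" and B :: "nat set"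
    using that by (simp add: countable_finite finite_PiE)
  have "countable params"
    unfolding params_def
    by (intro countable_SIGMA countable_Collect_finite countableI_type) (simp_all add: patterns)
  moreover have "{X. sofic X} \<subseteq> (\<lambda>(B, \<Omega>, P, m, T). block_code m T ` SFT_set B \<Omega> P) ` params"
    using sofic_eq_block_code_image by (fastforce simp: params_def)
  ultimately show ?thesis
    by (meson countable_image countable_subset)
qed

section \<open>Gap shifts\<close>

definition allowed_gap :: "nat set \<Rightarrow> int \<Rightarrow> bool" where
  "allowed_gap T d \<longleftrightarrow> d mod 4 = 2 \<or> (\<exists>k\<in>T. d = 4 * int k + 4)"

definition gap_shift :: "nat set \<Rightarrow> (int \<Rightarrow> bool) set" where
  "gap_shift T = {x. \<forall>i j. i < j \<and> x i \<and> x j \<and> (\<forall>k. i < k \<and> k < j \<longrightarrow> \<not> x k)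
                          \<longrightarrow> allowed_gap T (j - i)}"

lemma gap_shiftI:
  assumes "\<And>i j. i < j \<Longrightarrow> x i \<Longrightarrow> x j \<Longrightarrow> (\<And>k. i < k \<Longrightarrow> k < j \<Longrightarrow> \<not> x k)
             \<Longrightarrow> allowed_gap T (j - i)"
  shows "x \<in> gap_shift T"
  using assms by (auto simp: gap_shift_def)

lemma gap_shiftD:
  assumes "x \<in> gap_shift T" and "i < j" and "x i" and "x j" and "\<And>k. i < k \<Longrightarrow> k < j \<Longrightarrow> \<not> x k"
  shows "allowed_gap T (j - i)"
  using assms by (auto simp: gap_shift_def)

lemma allowed_gap_even: "allowed_gap T d \<Longrightarrow> even d"
  unfolding allowed_gap_def by (metis dvd_mod_iff even_add even_mult_iff even_numeral)

lemma gap_shift_even_distance: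
  assumes "x \<in> gap_shift T" and "i < j" and "x i" and "x j"
  shows "even (j - i)"
  using assms(2-)
proof (induction "nat (j - i)" arbitrary: i j rule: less_induct)
  case less
  show ?case
  proof (cases "\<exists>k. i < k \<and> k < j \<and> x k")
    case True
    then obtain k where k: "i < k" "k < j" "x k" by blast
    have "even (k - i)" using less.hyps[of k i] k less.prems by auto
    moreover have "even (j - k)" using less.hyps[of j k] k less.prems by auto
    ultimately have "even ((k - i) + (j - k))" by simp
    then show ?thesis by simp
  next
    case False
    then show ?thesis
      using gap_shiftD[OF assms(1) less.prems] allowed_gap_even by blast
  qed
qed

lemma shift_gap_shift: "x \<in> gap_shift T \<Longrightarrow> shift g x \<in> gap_shift T"
proof (rule gap_shiftI)
  fix i j
  assume "x \<in> gap_shift T" "i < j" "shift g x i" "shift g x j"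
    and between: "\<And>k. i < k \<Longrightarrow> k < j \<Longrightarrow> \<not> shift g x k"
  moreover have "\<not> x k" if "i - g < k" "k < j - g" for k
    using between[of "k + g"] that by (simp add: shift_def)
  ultimately have "allowed_gap T ((j - g) - (i - g))"
    by (intro gap_shiftD[of x]) (auto simp: shift_def)
  then show "allowed_gap T (j - i)" by simp
qed

lemma closed_gap_shift: "closed_conf (gap_shift T)"
  unfolding closed_conf_def
proof (intro allI impI)
  fix x :: "int \<Rightarrow> bool"
  assume approx: "\<forall>n::nat. \<exists>y\<in>gap_shift T. \<forall>i. \<bar>i\<bar> \<le> int n \<longrightarrow> y i = x i"
  show "x \<in> gap_shift T"
  proof (rule gap_shiftI)
    fix i j assume ij: "i < j" "x i" "x j" and between: "\<And>k. i < k \<Longrightarrow> k < j \<Longrightarrow> \<not> x k"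
    obtain y where y: "y \<in> gap_shift T" and agree: "\<forall>k. \<bar>k\<bar> \<le> int (nat (\<bar>i\<bar> + \<bar>j\<bar>)) \<longrightarrow> y k = x k"
      using approx by blast
    have "y k = x k" if "i \<le> k" "k \<le> j" for k
      using agree that by auto
    then show "allowed_gap T (j - i)"
      using gap_shiftD[OF y] ij between by (metis order.refl less_imp_le order.strict_trans)
  qed
qed

lemma subshift_gap_shift: "subshift (gap_shift T)"
  by (simp add: subshift_def closed_gap_shift shift_gap_shift)

lemma gap_shift_truncate: "x \<in> gap_shift T \<Longrightarrow> (\<lambda>k. a \<le> k \<and> k < b \<and> x k) \<in> gap_shift T"
  by (rule gap_shiftI) (auto intro: gap_shiftD[of x])

lemma gap_shift_join:
  assumes x: "x \<in> gap_shift T" and y: "y \<in> gap_shift T"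
    and x_ones: "\<And>k. x k \<Longrightarrow> k < M" and y_ones: "\<And>k. y k \<Longrightarrow> M < k"
    and last: "\<And>i. x i \<Longrightarrow> \<forall>k>i. \<not> x k \<Longrightarrow> (M - i) mod 4 = 2"
    and first: "\<And>j. y j \<Longrightarrow> \<forall>k<j. \<not> y k \<Longrightarrow> (j - M) mod 4 = 2"
  shows "(\<lambda>k. if k < M then x k else if k = M then True else y k) \<in> gap_shift T"
    (is "?z \<in> _")
proof (rule gap_shiftI)
  fix i j assume ij: "i < j" "?z i" "?z j" and between: "\<And>k. i < k \<Longrightarrow> k < j \<Longrightarrow> \<not> ?z k"
  have "\<not> (i < M \<and> M < j)"
    using between[of M] by auto
  then consider "j < M" | "i < M" "j = M" | "i = M" "M < j" | "M < i"
    using ij(1) by linarith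
  then show "allowed_gap T (j - i)"
  proof cases
    case 1
    then show ?thesis using gap_shiftD[OF x ij(1)] ij between by auto
  next
    case 2
    then have "\<forall>k>i. \<not> x k"
      using between x_ones by force
    then show ?thesis using last[of i] 2 ij by (simp add: allowed_gap_def)
  next
    case 3
    then have "\<forall>k<j. \<not> y k"
      using between y_ones by force
    then show ?thesis using first[of j] 3 ij by (simp add: allowed_gap_def)
  next
    case 4
    then show ?thesis using gap_shiftD[OF y ij(1)] ij between by auto
  qed
qed

lemma exists_offset_to_last_one:
  fixes x :: "int \<Rightarrow> bool"
  assumes "finite {k. x k}"
  shows "\<exists>s. 0 \<le> s \<and> s \<le> 3 \<and> (\<forall>i. x i \<and> (\<forall>k>i. \<not> x k) \<longrightarrow> (a + s - i) mod 4 = 2)"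
proof (cases "\<exists>i. x i")
  case True
  define p where "p = Max {k. x k}"
  have last: "i = p" if "x i" and after: "\<forall>k>i. \<not> x k" for i
  proof -
    have "x p" using Max_in[OF assms] True unfolding p_def by auto
    moreover have "i \<le> p" using Max_ge[OF assms] that(1) unfolding p_def by auto
    ultimately show ?thesis using after by force
  qed
  have "(a + (2 - a + p) mod 4 - p) mod 4 = ((a - p) + (2 - a + p) mod 4) mod 4"
    by (simp add: algebra_simps)
  also have "\<dots> = 2"
    by (simp add: mod_add_right_eq)
  finally show ?thesis
    using last by (intro exI[of _ "(2 - a + p) mod 4"]) auto
qed auto

lemma exists_offset_to_first_one:
  fixes y :: "int \<Rightarrow> bool"
  assumes "finite {k. y k}"
  shows "\<exists>t. 0 \<le> t \<and> t \<le> 3 \<and> (\<forall>j. y j \<and> (\<forall>k<j. \<not> y k) \<longrightarrow> (1 + t + j) mod 4 = 2)"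
proof -
  have "finite {k. y (- k)}"
    using finite_vimageI[OF assms, of uminus] by (simp add: vimage_def inj_on_def)
  then obtain t where t: "0 \<le> t" "t \<le> 3"
    and first: "\<forall>i. y (- i) \<and> (\<forall>k>i. \<not> y (- k)) \<longrightarrow> (1 + t - i) mod 4 = 2"
    using exists_offset_to_last_one[where a = 1] by blast
  have "(1 + t + j) mod 4 = 2" if "y j" and before: "\<forall>k<j. \<not> y k" for j
    using first[rule_format, of "- j"] that by (metis minus_minus neg_less_iff_less diff_minus_eq_add)
  with t show ?thesis by blast
qed

lemma gap_shift_bridge:
  assumes "x \<in> gap_shift T" and "y \<in> gap_shift T"
    and x_ones: "\<And>k. x k \<Longrightarrow> 0 \<le> k \<and> k < a" and y_ones: "\<And>k. y k \<Longrightarrow> 0 \<le> k \<and> k < b"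
  obtains L z where "L \<le> 7" and "z \<in> gap_shift T" and "\<And>k. k < a \<Longrightarrow> z k = x k"
    and "\<And>k. a + int L \<le> k \<Longrightarrow> z k = y (k - (a + int L))"
proof -
  have "finite {k. x k}"
    by (rule finite_subset[of _ "{0..<a}"]) (auto dest: x_ones)
  then obtain s where s: "0 \<le> s" "s \<le> 3"
    and last: "\<forall>i. x i \<and> (\<forall>k>i. \<not> x k) \<longrightarrow> (a + s - i) mod 4 = 2"
    using exists_offset_to_last_one by blast
  have "finite {k. y k}"
    by (rule finite_subset[of _ "{0..<b}"]) (auto dest: y_ones)
  then obtain t where t: "0 \<le> t" "t \<le> 3"
    and first: "\<forall>j. y j \<and> (\<forall>k<j. \<not> y k) \<longrightarrow> (1 + t + j) mod 4 = 2"
    using exists_offset_to_first_one by blast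
  \<comment> \<open>the bridge is a single 1 at M, at distance 2 mod 4 from the last 1 of x
    and from the first 1 of y, which is moved to V\<close>
  define M where "M = a + s"
  define V where "V = M + 1 + t"
  define z where "z = (\<lambda>k. if k < M then x k else if k = M then True else shift V y k)"
  have "z \<in> gap_shift T"
    unfolding z_def
  proof (rule gap_shift_join)
    show "shift V y \<in> gap_shift T"
      using \<open>y \<in> gap_shift T\<close> by (rule shift_gap_shift)
    show "x k \<Longrightarrow> k < M" for k
      using s x_ones[of k] by (simp add: M_def)
    show "shift V y k \<Longrightarrow> M < k" for k
      using t y_ones[of "k - V"] by (simp add: shift_def V_def)
    show "(M - i) mod 4 = 2" if "x i" and "\<forall>k>i. \<not> x k" for i
      using last that by (simp add: M_def)
    show "(j - M) mod 4 = 2" if "shift V y j" and before: "\<forall>k<j. \<not> shift V y k" for j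
    proof -
      have "\<not> y k" if "k < j - V" for k
        using before[rule_format, of "k + V"] that by (simp add: shift_def)
      then have "(1 + t + (j - V)) mod 4 = 2"
        using first \<open>shift V y j\<close> by (simp add: shift_def)
      then show ?thesis
        by (simp add: V_def algebra_simps)
    qed
  qed fact+
  define L where "L = nat (1 + s + t)"
  have V: "V = a + int L"
    using s t by (simp add: V_def M_def L_def)
  show thesis
  proof (rule that)
    show "L \<le> 7"
      using s t by (simp add: L_def)
    show "z k = x k" if "k < a" for k
      using that s by (simp add: z_def M_def)
    show "z k = y (k - (a + int L))" if "a + int L \<le> k" for k
      using that t V by (simp add: z_def V_def shift_def)
  qed fact
qed

lemma W_subshift_gap_shift: "W_subshift (gap_shift T)"
  unfolding W_subshift_def
proof (intro conjI subshift_gap_shift exI[of _ 7] ballI)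
  fix u v assume "u \<in> lang (gap_shift T)" and "v \<in> lang (gap_shift T)"
  then obtain xu xv where xu: "xu \<in> gap_shift T" "u = window xu 0 (length u)"
    and xv: "xv \<in> gap_shift T" "v = window xv 0 (length v)"
    by (metis subshift_word_at_origin subshift_gap_shift)
  let ?x = "\<lambda>k. 0 \<le> k \<and> k < int (length u) \<and> xu k"
  let ?y = "\<lambda>k. 0 \<le> k \<and> k < int (length v) \<and> xv k"
  obtain L z where "L \<le> 7" "z \<in> gap_shift T" and left: "\<And>k. k < int (length u) \<Longrightarrow> z k = ?x k"
    and right: "\<And>k. int (length u) + int L \<le> k \<Longrightarrow> z k = ?y (k - (int (length u) + int L))"
    using gap_shift_bridge[of ?x T ?y "int (length u)" "int (length v)"] xu(1) xv(1)
    by (auto intro: gap_shift_truncate)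
  have "window xu 0 (length u) = window z 0 (length u)"
    using left by (intro window_cong) simp
  with xu(2) have "u = window z 0 (length u)" by simp
  moreover have "window xv 0 (length v) = window (shift (- (int (length u) + int L)) z) 0 (length v)"
    using right by (intro window_cong) (simp add: shift_def)
  with xv(2) have "v = window z (int (length u) + int L) (length v)"
    by (simp add: window_shift add.commute)
  ultimately have "u @ window z (int (length u)) L @ v = window z 0 (length u + L + length v)"
    by (simp add: window_append)
  then show "\<exists>c\<in>lang (gap_shift T). length c \<le> 7 \<and> u @ c @ v \<in> lang (gap_shift T)"
    using \<open>L \<le> 7\<close> \<open>z \<in> gap_shift T\<close>
    by (intro bexI[of _ "window z (int (length u)) L"]) (auto simp: window_in_lang)
qed

lemma strongly_irreducible_independent_sites:
  assumes "strongly_irreducible X"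
  shows "\<exists>N::int. \<forall>n\<ge>N. \<forall>x1\<in>X. \<forall>x2\<in>X. \<exists>x\<in>X. x 0 = x1 0 \<and> x n = x2 n"
proof -
  from assms obtain \<Delta> :: "int set" where "finite \<Delta>"
    and glue: "\<forall>\<Omega>1 \<Omega>2. finite \<Omega>1 \<and> finite \<Omega>2 \<and> {a - d |a d. a \<in> \<Omega>1 \<and> d \<in> \<Delta>} \<inter> \<Omega>2 = {} \<longrightarrow>
          (\<forall>x1\<in>X. \<forall>x2\<in>X. \<exists>x\<in>X. (\<forall>i\<in>\<Omega>1. x i = x1 i) \<and> (\<forall>i\<in>\<Omega>2. x i = x2 i))"
    unfolding strongly_irreducible_def by auto
  define N where "N = (\<Sum>d\<in>\<Delta>. \<bar>d\<bar>) + 1"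
  have disjoint: "{a - d |a d. a \<in> {0} \<and> d \<in> \<Delta>} \<inter> {n} = {}" if "N \<le> n" for n
  proof -
    have "\<bar>d\<bar> < N" if "d \<in> \<Delta>" for d
      using member_le_sum[OF that, of abs] \<open>finite \<Delta>\<close> unfolding N_def by simp
    then show ?thesis using \<open>N \<le> n\<close> by fastforce
  qed
  have "\<exists>x\<in>X. x 0 = x1 0 \<and> x n = x2 n" if "N \<le> n" "x1 \<in> X" "x2 \<in> X" for n x1 x2
    using glue[rule_format, of "{0}" "{n}" x1 x2] disjoint[OF that(1)] that(2,3) by simp
  then show ?thesis by blast
qed

lemma not_strongly_irreducible_gap_shift: "\<not> strongly_irreducible (gap_shift T)"
proof
  assume "strongly_irreducible (gap_shift T)"
  then obtain N where independent:
    "\<forall>n\<ge>N. \<forall>x1\<in>gap_shift T. \<forall>x2\<in>gap_shift T. \<exists>x\<in>gap_shift T. x 0 = x1 0 \<and> x n = x2 n"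
    using strongly_irreducible_independent_sites by blast
  define n where "n = 2 * \<bar>N\<bar> + 1"
  have single: "(\<lambda>i. i = k) \<in> gap_shift T" for k
    by (rule gap_shiftI) simp
  have "N \<le> n"
    using abs_ge_self[of N] unfolding n_def by linarith
  then obtain x where x: "x \<in> gap_shift T" "x 0" "x n"
    using independent[rule_format, OF _ single[of 0] single[of n]] by auto
  have "0 < n" by (simp add: n_def)
  then have "even (n - 0)"
    using gap_shift_even_distance[OF x(1) _ x(2,3)] by simp
  then show False by (simp add: n_def)
qed

lemma inj_gap_shift: "inj gap_shift"
proof (rule injI)
  have "k \<in> T'" if "gap_shift T = gap_shift T'" and "k \<in> T" for T T' k
  proof -
    define x where "x = (\<lambda>p::int. p = 0 \<or> p = 4 * int k + 4)"
    have "x \<in> gap_shift T"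
      using that(2) by (intro gap_shiftI) (auto simp: x_def allowed_gap_def)
    then have "allowed_gap T' (4 * int k + 4 - 0)"
      using that(1) by (intro gap_shiftD[of x]) (auto simp: x_def)
    then show ?thesis by (auto simp: allowed_gap_def)
  qed
  then show "gap_shift T = gap_shift T' \<Longrightarrow> T = T'" for T T'
    by blast
qed

lemma uncountable_UNIV_nat_set: "uncountable (UNIV :: nat set set)"
  using Cantors_theorem[of "UNIV :: nat set"] by (auto simp: uncountable_def)

theorem proposition4p8:
  shows "uncountable {X :: (int \<Rightarrow> bool) set.
           W_subshift X \<and> \<not> sofic X \<and> \<not> strongly_irreducible X}"
proof
  assume "countable {X :: (int \<Rightarrow> bool) set.
           W_subshift X \<and> \<not> sofic X \<and> \<not> strongly_irreducible X}"
  moreover have "range gap_shift \<subseteq> {X. W_subshift X \<and> \<not> sofic X \<and> \<not> strongly_irreducible X}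
      \<union> {X. sofic X}"
    using W_subshift_gap_shift not_strongly_irreducible_gap_shift by auto
  ultimately have "countable (range gap_shift)"
    using countable_sofic by (meson countable_Un countable_subset)
  then have "countable (UNIV :: nat set set)"
    using inj_gap_shift by (rule countable_image_inj_on)
  with uncountable_UNIV_nat_set show False by contradiction
qed

end
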